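(* Consider, for each $p$, the model $Y = X\beta^\star + Z$ described in the context, with $\beta^\star \in \mathcal{B}_{p,s}$ and the estimator $\hat\beta \in \arg\min_{\beta \in \mathcal{B}_{p,s}} \|Y - X\beta\|_2^2$. Fix $\delta \in (0,1)$. 1. If $s = o(p)$ and $s \to +\infty$ as $p \to +\infty$, set $n^\star := 2 s \log(p/s)$. 2. If $s = \alpha p$ for some constant $\alpha \in (0,1)$, set $n^\star := 2 h(\alpha) p$. In both settings, if there exists $\varepsilon > 0$ such that (for all sufficiently large $p$) $$ n_1 \log\left(1 + \frac{\delta (2\sigma_2^2 - \sigma_1^2) s}{2\sigma_2^4}\right) + n_2 \log\left(1 + \frac{\delta s}{2\sigma_2^2}\right) \ge (1+\varepsilon) n^\star, $$ then $$ \mathbb{P}\Big( |\operatorname{supp}(\beta^\star) \,\triangle\, \operatorname{supp}(\hat\beta)| < 2\delta s \Big) \ge 1 - \exp\{-(\varepsilon + o(1)) n^\star/2\} \xrightarrow{p\to+\infty} 1 .$$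
   Context: All quantities may depend on $p$, and asymptotics are as $p \to +\infty$. Sample sizes $n_1, n_2 \ge 1$, $n = n_1 + n_2$. The design $X \in \mathbb{R}^{n\times p}$ has i.i.d. $\mathcal{N}(0,1)$ entries. Noise levels satisfy $0 < \sigma_1^2 < \sigma_2^2$; $\Sigma = \begin{pmatrix} \sigma_1 I_{n_1} & 0 \\ 0 & \sigma_2 I_{n_2}\end{pmatrix}$, $W \sim \mathcal{N}(0, I_n)$ independent of $X$, and $Z = \Sigma W$ (so the first $n_1$ observations have noise variance $\sigma_1^2$ and the last $n_2$ have variance $\sigma_2^2$). The signal $\beta^\star$ is deterministic and belongs to $\mathcal{B}_{p,s} := \{\beta \in \{0,1\}^p : \|\beta\|_0 = s\}$, where $\|\beta\|_0$ is the number of nonzero coordinates. $\operatorname{supp}(\beta) = \{i : \beta_i \neq 0\}$, $A \triangle B = (A\cup B)\setminus(A\cap B)$. $h(x) = -x\log x - (1-x)\log(1-x)$ is the binary entropy (natural logarithm). The estimator $\hat\beta$ is any minimizer (it does not use knowledge of $\sigma_1,\sigma_2,n_1,n_2$). *)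

theory Defs
  imports "HOL-Probability.Probability"
begin

definition bin_entropy :: "real \<Rightarrow> real" where
  "bin_entropy x = - x * ln x - (1 - x) * ln (1 - x)"

definition gauss :: "real measure" where
  "gauss = density lborel std_normal_density"

text \<open>Sample space: the design X (entries indexed by (i,j), i < n, j < p) and the
  noise vector W (indexed by i < n), all entries i.i.d. N(0,1), X independent of W.\<close>
definition design_space :: "nat \<Rightarrow> nat \<Rightarrow> ((nat \<times> nat \<Rightarrow> real) \<times> (nat \<Rightarrow> real)) measure" where
  "design_space n p = (PiM ({..<n} \<times> {..<p}) (\<lambda>_. gauss)) \<Otimes>\<^sub>M (PiM {..<n} (\<lambda>_. gauss))"

definition Bps :: "nat \<Rightarrow> nat \<Rightarrow> (nat \<Rightarrow> real) set" where
  "Bps p s = {\<beta>. (\<forall>j. \<beta> j \<in> {0, 1}) \<and> (\<forall>j\<ge>p. \<beta> j = 0) \<and> card {j. \<beta> j \<noteq> 0} = s}"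

definition supp :: "(nat \<Rightarrow> real) \<Rightarrow> nat set" where
  "supp \<beta> = {j. \<beta> j \<noteq> 0}"

definition symdiff :: "'a set \<Rightarrow> 'a set \<Rightarrow> 'a set" where
  "symdiff A B = (A \<union> B) - (A \<inter> B)"

text \<open>Noise standard deviation of observation i (diagonal of Sigma).\<close>
definition noise_sd :: "nat \<Rightarrow> real \<Rightarrow> real \<Rightarrow> nat \<Rightarrow> real" where
  "noise_sd n1 \<sigma>1 \<sigma>2 i = (if i < n1 then \<sigma>1 else \<sigma>2)"

definition response :: "nat \<Rightarrow> nat \<Rightarrow> real \<Rightarrow> real \<Rightarrow> (nat \<Rightarrow> real)
    \<Rightarrow> (nat \<times> nat \<Rightarrow> real) \<Rightarrow> (nat \<Rightarrow> real) \<Rightarrow> nat \<Rightarrow> real" where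
  "response p n1 \<sigma>1 \<sigma>2 \<beta>s X W i =
     (\<Sum>j<p. X (i, j) * \<beta>s j) + noise_sd n1 \<sigma>1 \<sigma>2 i * W i"

definition rss :: "nat \<Rightarrow> nat \<Rightarrow> (nat \<times> nat \<Rightarrow> real) \<Rightarrow> (nat \<Rightarrow> real) \<Rightarrow> (nat \<Rightarrow> real) \<Rightarrow> real" where
  "rss n p X Y \<beta> = (\<Sum>i<n. (Y i - (\<Sum>j<p. X (i, j) * \<beta> j))\<^sup>2)"

definition ls_argmin :: "nat \<Rightarrow> nat \<Rightarrow> nat \<Rightarrow> (nat \<times> nat \<Rightarrow> real) \<Rightarrow> (nat \<Rightarrow> real) \<Rightarrow> (nat \<Rightarrow> real) set" where
  "ls_argmin n p s X Y = {\<beta> \<in> Bps p s. \<forall>\<beta>' \<in> Bps p s. rss n p X Y \<beta> \<le> rss n p X Y \<beta>'}"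

text \<open>Probability that EVERY least-squares minimizer beta-hat satisfies
  |supp beta* triangle supp beta-hat| < 2 delta s (so the bound holds whatever
  minimizer the estimator returns).\<close>
definition recovery_prob :: "nat \<Rightarrow> nat \<Rightarrow> nat \<Rightarrow> nat \<Rightarrow> real \<Rightarrow> real \<Rightarrow> (nat \<Rightarrow> real) \<Rightarrow> real \<Rightarrow> real" where
  "recovery_prob n1 n2 p s \<sigma>1 \<sigma>2 \<beta>s \<delta> =
     measure (design_space (n1 + n2) p)
       {\<omega> \<in> space (design_space (n1 + n2) p).
          \<forall>\<beta>h \<in> ls_argmin (n1 + n2) p s (fst \<omega>) (response p n1 \<sigma>1 \<sigma>2 \<beta>s (fst \<omega>) (snd \<omega>)).
            real (card (symdiff (supp \<beta>s) (supp \<beta>h))) < 2 * \<delta> * real s}"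

end

theory Submission
  imports Defs
begin

text \<open>
  Union bound over the competitors beta in B_{p,s} with |supp beta* triangle supp beta| = m >= 2 delta s.
  With v = beta* - beta, least squares prefers beta to beta* iff
  sum_i ((X v)_i^2 + 2 (X v)_i sigma_i W_i) <= 0, where the (X v)_i are independent N(0, m).
  A Chernoff bound with parameter t = 1/(4 sigma_2^2), together with E exp(b W) = exp(b^2/2) and
  E exp(-a g^2) = (1 + 2 a m)^(-1/2) for g ~ N(0, m), bounds this probability by exp(-L/2), where L
  is the left-hand side of the sample-size condition. There are at most C(p, s) <= exp(p h(s/p))
  competitors, and p h(s/p) equals n*/2 in the linear regime and is at most n*/2 + s = (1 + o(1)) n*/2
  in the sublinear one.
\<close>

section \<open>Gaussian computations\<close>

lemma prob_space_gauss: "prob_space gauss"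
  unfolding gauss_def by (rule prob_space_normal_density) simp

lemma sets_gauss [simp, measurable_cong]: "sets gauss = sets borel"
  unfolding gauss_def by simp

lemma space_gauss [simp]: "space gauss = UNIV"
  unfolding gauss_def by simp

lemma nn_integral_gauss_exp_linear:
  "(\<integral>\<^sup>+w. ennreal (exp (b * w)) \<partial>gauss) = ennreal (exp (b\<^sup>2 / 2))"
proof -
  have shift: "std_normal_density w * exp (b * w) = exp (b\<^sup>2 / 2) * normal_density b 1 w" for w
  proof -
    have "exp (b\<^sup>2 / 2) * exp (- (w - b)\<^sup>2 / 2) = exp (- w\<^sup>2 / 2) * exp (b * w)"
      by (simp add: mult_exp_exp power2_eq_square algebra_simps add_divide_distrib diff_divide_distrib)
    then show ?thesis by (simp add: normal_density_def)
  qed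
  have "(\<integral>\<^sup>+w. ennreal (exp (b * w)) \<partial>gauss)
      = (\<integral>\<^sup>+w. ennreal (exp (b\<^sup>2 / 2)) * ennreal (normal_density b 1 w) \<partial>lborel)"
    unfolding gauss_def
    by (subst nn_integral_density) (auto simp: shift[symmetric] ennreal_mult'[symmetric])
  also have "\<dots> = ennreal (exp (b\<^sup>2 / 2)) * (\<integral>\<^sup>+w. ennreal (normal_density b 1 w) \<partial>lborel)"
    by (rule nn_integral_cmult) auto
  also have "(\<integral>\<^sup>+w. ennreal (normal_density b 1 w) \<partial>lborel) = 1"
    by (subst nn_integral_eq_integral) auto
  finally show ?thesis by simp
qed

lemma nn_integral_normal_density_exp_neg_square:
  assumes v: "0 < v" and a: "0 \<le> a"
  shows "(\<integral>\<^sup>+x. ennreal (normal_density 0 v x) * ennreal (exp (- a * x\<^sup>2)) \<partial>lborel)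
         = ennreal (1 / sqrt (1 + 2 * a * v\<^sup>2))"
proof -
  define r where "r = sqrt (1 + 2 * a * v\<^sup>2)"
  have r: "0 < r" "r\<^sup>2 = 1 + 2 * a * v\<^sup>2"
    using a v by (auto simp: r_def add_pos_nonneg)
  have rescale: "normal_density 0 v x * exp (- a * x\<^sup>2) = normal_density 0 (v / r) x / r" for x
  proof -
    have e: "exp (- x\<^sup>2 / (2 * v\<^sup>2)) * exp (- a * x\<^sup>2) = exp (- x\<^sup>2 / (2 * (v / r)\<^sup>2))"
      unfolding mult_exp_exp using v r by (simp add: power_divide field_simps)
    have "sqrt (2 * (pi * (v / r)\<^sup>2)) = sqrt (2 * (pi * v\<^sup>2)) / sqrt (r\<^sup>2)"
      by (simp add: power_divide real_sqrt_divide)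
    then have sq: "sqrt (2 * (pi * (v / r)\<^sup>2)) = sqrt (2 * (pi * v\<^sup>2)) / r"
      using r(1) by simp
    show ?thesis unfolding normal_density_def mult.assoc sq using e r(1) v by simp
  qed
  have "(\<integral>\<^sup>+x. ennreal (normal_density 0 v x) * ennreal (exp (- a * x\<^sup>2)) \<partial>lborel)
      = (\<integral>\<^sup>+x. ennreal (1 / r) * ennreal (normal_density 0 (v / r) x) \<partial>lborel)"
    using r(1) by (intro nn_integral_cong) (simp add: ennreal_mult[symmetric] rescale[simplified])
  also have "\<dots> = ennreal (1 / r) * (\<integral>\<^sup>+x. ennreal (normal_density 0 (v / r) x) \<partial>lborel)"
    by (rule nn_integral_cmult) auto
  also have "(\<integral>\<^sup>+x. ennreal (normal_density 0 (v / r) x) \<partial>lborel) = 1"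
    using v r(1) by (subst nn_integral_eq_integral) auto
  finally show ?thesis by (simp add: r_def)
qed

lemma prob_space_PiM_gauss: "prob_space (PiM K (\<lambda>_. gauss))"
  by (rule prob_space_PiM) (rule prob_space_gauss)

lemma prob_space_design_space: "prob_space (design_space n p)"
proof -
  interpret X: prob_space "PiM ({..<n} \<times> {..<p}) (\<lambda>_. gauss)" by (rule prob_space_PiM_gauss)
  interpret W: prob_space "PiM {..<n} (\<lambda>_. gauss)" by (rule prob_space_PiM_gauss)
  interpret pair_prob_space "PiM ({..<n} \<times> {..<p}) (\<lambda>_. gauss)" "PiM {..<n} (\<lambda>_. gauss)" ..
  show ?thesis unfolding design_space_def by (rule prob_space_axioms)
qed

lemma indep_vars_PiM_gauss_components:
  assumes f: "inj_on f S" "f ` S \<subseteq> K" and S: "S \<noteq> {}"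
  shows "prob_space.indep_vars (PiM K (\<lambda>_. gauss)) (\<lambda>_. borel) (\<lambda>j \<omega>. \<omega> (f j)) S"
proof -
  interpret P: prob_space "PiM K (\<lambda>_. gauss)" by (rule prob_space_PiM_gauss)
  have rv: "(\<lambda>\<omega>. \<omega> (f j)) \<in> measurable (PiM K (\<lambda>_. gauss)) gauss" if "j \<in> S" for j
    using f that measurable_component_singleton[of "f j" K "\<lambda>_. gauss"] by auto
  have "distr (PiM K (\<lambda>_. gauss)) (\<Pi>\<^sub>M j\<in>S. gauss) (\<lambda>\<omega>. \<lambda>j\<in>S. \<omega> (f j)) = (\<Pi>\<^sub>M j\<in>S. gauss)"
    using distr_PiM_reindex[of K "\<lambda>_. gauss" f S] f prob_space_gauss by auto
  also have "\<dots> = (\<Pi>\<^sub>M j\<in>S. distr (PiM K (\<lambda>_. gauss)) gauss (\<lambda>\<omega>. \<omega> (f j)))"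
    by (intro PiM_cong refl distr_PiM_component[symmetric] prob_space_gauss) (use f in auto)
  finally have "P.indep_vars (\<lambda>_. gauss) (\<lambda>j \<omega>. \<omega> (f j)) S"
    by (subst P.indep_vars_iff_distr_eq_PiM'[OF S rv]) auto
  then show ?thesis
    by (rule P.indep_vars_compose2[where Y = "\<lambda>_ x. x", simplified]) simp
qed

lemma distributed_PiM_gauss_component:
  assumes "k \<in> K"
  shows "distributed (PiM K (\<lambda>_. gauss)) lborel (\<lambda>\<omega>. \<omega> k) std_normal_density"
proof -
  have "distr (PiM K (\<lambda>_. gauss)) lborel (\<lambda>\<omega>. \<omega> k) = distr (PiM K (\<lambda>_. gauss)) gauss (\<lambda>\<omega>. \<omega> k)"
    by (rule distr_cong) auto
  also have "\<dots> = gauss" using assms by (intro distr_PiM_component prob_space_gauss)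
  finally show ?thesis unfolding distributed_def using assms
    by (auto simp: gauss_def intro!: measurable_component_singleton measurable_ident_sets)
qed

lemma distributed_PiM_gauss_signed_row_sum:
  fixes v :: "nat \<Rightarrow> real"
  assumes v: "\<forall>j<p. v j \<in> {-1, 0, 1}" and J: "{j. j < p \<and> v j \<noteq> 0} \<noteq> {}" and i: "i \<in> I"
  shows "distributed (PiM (I \<times> {..<p}) (\<lambda>_. gauss)) lborel (\<lambda>\<omega>. \<Sum>j<p. \<omega> (i, j) * v j)
           (normal_density 0 (sqrt (real (card {j. j < p \<and> v j \<noteq> 0}))))"
proof -
  interpret P: prob_space "PiM (I \<times> {..<p}) (\<lambda>_. gauss)" by (rule prob_space_PiM_gauss)
  define J where "J = {j. j < p \<and> v j \<noteq> 0}"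
  have indep: "P.indep_vars (\<lambda>_. borel) (\<lambda>j \<omega>. \<omega> (i, j)) J"
    by (rule indep_vars_PiM_gauss_components) (use J i in \<open>auto simp: J_def inj_on_def\<close>)
  have indep_scaled: "P.indep_vars (\<lambda>_. borel) (\<lambda>j \<omega>. \<omega> (i, j) * v j) J"
    using P.indep_vars_compose2[OF indep, of "\<lambda>j x. x * v j" "\<lambda>_. borel"] by simp
  have standard: "distributed (PiM (I \<times> {..<p}) (\<lambda>_. gauss)) lborel (\<lambda>\<omega>. \<omega> (i, j) * v j)
      (normal_density 0 1)" if j: "j \<in> J" for j
  proof -
    have vj: "v j \<noteq> 0" "\<bar>v j\<bar> = 1" using j v by (auto simp: J_def)
    have "distributed (PiM (I \<times> {..<p}) (\<lambda>_. gauss)) lborel (\<lambda>\<omega>. 0 + v j * \<omega> (i, j))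
            (normal_density (0 + v j * 0) (\<bar>v j\<bar> * 1))"
      by (rule P.normal_density_affine)
        (use distributed_PiM_gauss_component[of "(i, j)" "I \<times> {..<p}"] i j vj in \<open>auto simp: J_def\<close>)
    then show ?thesis using vj by (simp add: mult.commute)
  qed
  have "distributed (PiM (I \<times> {..<p}) (\<lambda>_. gauss)) lborel (\<lambda>\<omega>. \<Sum>j\<in>J. \<omega> (i, j) * v j)
           (normal_density (\<Sum>j\<in>J. 0) (sqrt (\<Sum>j\<in>J. 1\<^sup>2)))"
    by (rule P.sum_indep_normal[OF _ _ indep_scaled]) (use J standard in \<open>auto simp: J_def\<close>)
  moreover have "(\<lambda>\<omega>. \<Sum>j<p. \<omega> (i, j) * v j) = (\<lambda>\<omega>. \<Sum>j\<in>J. \<omega> (i, j) * v j)"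
    by (intro ext sum.mono_neutral_right) (auto simp: J_def)
  ultimately show ?thesis by (simp add: J_def)
qed

lemma nn_integral_gauss_rows_exp_neg_square:
  fixes v a :: "nat \<Rightarrow> real"
  assumes v: "\<forall>j<p. v j \<in> {-1, 0, 1}" and J: "{j. j < p \<and> v j \<noteq> 0} \<noteq> {}"
    and a: "\<forall>i<n. 0 \<le> a i" and n: "0 < n"
  shows "(\<integral>\<^sup>+\<omega>. (\<Prod>i<n. ennreal (exp (- a i * (\<Sum>j<p. \<omega> (i, j) * v j)\<^sup>2)))
             \<partial>PiM ({..<n} \<times> {..<p}) (\<lambda>_. gauss))
       = (\<Prod>i<n. ennreal (1 / sqrt (1 + 2 * a i * real (card {j. j < p \<and> v j \<noteq> 0}))))"
proof -
  define M where "M = PiM ({..<n} \<times> {..<p}) (\<lambda>_. gauss)"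
  interpret P: prob_space M unfolding M_def by (rule prob_space_PiM_gauss)
  define m where "m = real (card {j. j < p \<and> v j \<noteq> 0})"
  define row where "row i \<omega> = restrict \<omega> ({i} \<times> {..<p})" for \<omega> :: "nat \<times> nat \<Rightarrow> real" and i
  define Y where "Y i \<omega> = ennreal (exp (- a i * (\<Sum>j<p. \<omega> (i, j) * v j)\<^sup>2))"
    for i and \<omega> :: "nat \<times> nat \<Rightarrow> real"
  have m: "0 < m" using J by (auto simp: m_def card_gt_0_iff)
  have Y_row: "Y i (row i \<omega>) = Y i \<omega>" for i \<omega>
    unfolding Y_def row_def by (auto intro!: sum.cong)
  have "P.indep_vars (\<lambda>_. borel) (\<lambda>k \<omega>. \<omega> k) ({..<n} \<times> {..<p})"
    using indep_vars_PiM_gauss_components[of id "{..<n} \<times> {..<p}"] J n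
    by (auto simp: M_def)
  then have "P.indep_vars (\<lambda>i. PiM ({i} \<times> {..<p}) (\<lambda>_. borel)) (\<lambda>i \<omega>. row i \<omega>) {..<n}"
    unfolding row_def by (rule P.indep_vars_restrict) (auto simp: disjoint_family_on_def)
  then have rows: "P.indep_vars (\<lambda>_. borel) (\<lambda>i \<omega>. Y i (row i \<omega>)) {..<n}"
    by (rule P.indep_vars_compose2) (simp add: Y_def)
  have "(\<integral>\<^sup>+\<omega>. (\<Prod>i<n. Y i \<omega>) \<partial>M) = (\<Prod>i<n. \<integral>\<^sup>+\<omega>. Y i \<omega> \<partial>M)"
    using P.indep_vars_nn_integral[OF _ rows] by (simp add: Y_row)
  also have "\<dots> = (\<Prod>i<n. ennreal (1 / sqrt (1 + 2 * a i * m)))"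
  proof (rule prod.cong[OF refl])
    fix i assume i: "i \<in> {..<n}"
    have "(\<integral>\<^sup>+\<omega>. Y i \<omega> \<partial>M)
        = (\<integral>\<^sup>+x. ennreal (normal_density 0 (sqrt m) x) * ennreal (exp (- a i * x\<^sup>2)) \<partial>lborel)"
      unfolding Y_def M_def m_def
      by (rule distributed_nn_integral[OF distributed_PiM_gauss_signed_row_sum[OF v J i], symmetric])
        simp
    also have "\<dots> = ennreal (1 / sqrt (1 + 2 * a i * m))"
      using nn_integral_normal_density_exp_neg_square[of "sqrt m" "a i"] m a i by simp
    finally show "(\<integral>\<^sup>+\<omega>. Y i \<omega> \<partial>M) = ennreal (1 / sqrt (1 + 2 * a i * m))" .
  qed
  finally show ?thesis by (simp add: Y_def M_def m_def)
qed

lemma nn_integral_gauss_vector_exp_quadratic: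
  fixes g sd :: "nat \<Rightarrow> real" and t :: real
  shows "(\<integral>\<^sup>+W. ennreal (exp (- t * (\<Sum>i<n. (g i)\<^sup>2 + 2 * g i * (sd i * W i)))) \<partial>PiM {..<n} (\<lambda>_. gauss))
       = (\<Prod>i<n. ennreal (exp (- (t - 2 * t\<^sup>2 * (sd i)\<^sup>2) * (g i)\<^sup>2)))"
proof -
  define c where "c i = - 2 * t * sd i * g i" for i
  have split: "ennreal (exp (- t * (\<Sum>i<n. (g i)\<^sup>2 + 2 * g i * (sd i * W i))))
      = ennreal (\<Prod>i<n. exp (- t * (g i)\<^sup>2)) * (\<Prod>i<n. ennreal (exp (c i * W i)))" for W
  proof -
    have "exp (- t * (\<Sum>i<n. (g i)\<^sup>2 + 2 * g i * (sd i * W i)))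
        = (\<Prod>i<n. exp (- t * (g i)\<^sup>2) * exp (c i * W i))"
      unfolding sum_distrib_left[symmetric] exp_sum[OF finite_lessThan, symmetric] mult_exp_exp
      by (simp add: c_def sum_distrib_left algebra_simps sum_negf[symmetric])
    then show ?thesis
      by (simp add: prod.distrib ennreal_mult[symmetric] prod_nonneg prod_ennreal)
  qed
  have "product_sigma_finite (\<lambda>_::nat. gauss)"
    unfolding product_sigma_finite_def using prob_space_imp_sigma_finite[OF prob_space_gauss] by blast
  then have gauss_mgf: "(\<integral>\<^sup>+W. (\<Prod>i<n. ennreal (exp (c i * W i))) \<partial>PiM {..<n} (\<lambda>_. gauss))
      = (\<Prod>i<n. ennreal (exp ((c i)\<^sup>2 / 2)))"
    using product_sigma_finite.product_nn_integral_prod[of "\<lambda>_. gauss" "{..<n}" "\<lambda>i x. ennreal (exp (c i * x))"]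
    by (simp add: nn_integral_gauss_exp_linear)
  have "(\<integral>\<^sup>+W. ennreal (exp (- t * (\<Sum>i<n. (g i)\<^sup>2 + 2 * g i * (sd i * W i)))) \<partial>PiM {..<n} (\<lambda>_. gauss))
      = ennreal (\<Prod>i<n. exp (- t * (g i)\<^sup>2)) * (\<Prod>i<n. ennreal (exp ((c i)\<^sup>2 / 2)))"
    unfolding split gauss_mgf[symmetric] by (rule nn_integral_cmult) simp
  also have "\<dots> = ennreal ((\<Prod>i<n. exp (- t * (g i)\<^sup>2)) * (\<Prod>i<n. exp ((c i)\<^sup>2 / 2)))"
    by (simp add: ennreal_mult prod_nonneg prod_ennreal)
  also have "(\<Prod>i<n. exp (- t * (g i)\<^sup>2)) * (\<Prod>i<n. exp ((c i)\<^sup>2 / 2))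
      = (\<Prod>i<n. exp (- (t - 2 * t\<^sup>2 * (sd i)\<^sup>2) * (g i)\<^sup>2))"
    unfolding prod.distrib[symmetric] mult_exp_exp
    by (intro prod.cong refl arg_cong[where f = exp]) (simp add: c_def power2_eq_square algebra_simps)
  finally show ?thesis by (simp add: prod_ennreal)
qed

lemma design_space_quadratic_form_tail:
  fixes v sd :: "nat \<Rightarrow> real" and t :: real
  assumes v: "\<forall>j<p. v j \<in> {-1, 0, 1}" and J: "{j. j < p \<and> v j \<noteq> 0} \<noteq> {}"
    and a: "\<forall>i<n. 0 \<le> t - 2 * t\<^sup>2 * (sd i)\<^sup>2" and n: "0 < n" and t: "0 < t"
  shows "measure (design_space n p) {\<omega> \<in> space (design_space n p).
      (\<Sum>i<n. (\<Sum>j<p. fst \<omega> (i, j) * v j)\<^sup>2 + 2 * (\<Sum>j<p. fst \<omega> (i, j) * v j) * (sd i * snd \<omega> i)) \<le> 0}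
    \<le> (\<Prod>i<n. 1 / sqrt (1 + 2 * (t - 2 * t\<^sup>2 * (sd i)\<^sup>2) * real (card {j. j < p \<and> v j \<noteq> 0})))"
proof -
  define MX where "MX = PiM ({..<n} \<times> {..<p}) (\<lambda>_. gauss)"
  define MW where "MW = PiM {..<n} (\<lambda>_. gauss)"
  interpret D: prob_space "design_space n p" by (rule prob_space_design_space)
  interpret W: prob_space MW unfolding MW_def by (rule prob_space_PiM_gauss)
  define m where "m = real (card {j. j < p \<and> v j \<noteq> 0})"
  define g where "g X i = (\<Sum>j<p. X (i, j) * v j)" for X :: "nat \<times> nat \<Rightarrow> real" and i
  define Q where "Q \<omega> = (\<Sum>i<n. (g (fst \<omega>) i)\<^sup>2 + 2 * g (fst \<omega>) i * (sd i * snd \<omega> i))" for \<omega>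
  define A where "A = {\<omega> \<in> space (design_space n p). Q \<omega> \<le> 0}"
  define B where "B = (\<Prod>i<n. 1 / sqrt (1 + 2 * (t - 2 * t\<^sup>2 * (sd i)\<^sup>2) * m))"
  have factor_nonneg: "0 \<le> 1 / sqrt (1 + 2 * (t - 2 * t\<^sup>2 * (sd i)\<^sup>2) * m)" if "i < n" for i
  proof -
    have "0 \<le> 2 * (t - 2 * t\<^sup>2 * (sd i)\<^sup>2) * m" using a that by (intro mult_nonneg_nonneg) (auto simp: m_def)
    then show ?thesis by simp
  qed
  have D: "design_space n p = MX \<Otimes>\<^sub>M MW" by (simp add: design_space_def MX_def MW_def)
  have Q_measurable: "Q \<in> borel_measurable (design_space n p)"
    unfolding Q_def g_def D MX_def MW_def by measurable
  then have A_sets: "A \<in> sets (design_space n p)" unfolding A_def by measurable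
  have "emeasure (design_space n p) A = (\<integral>\<^sup>+\<omega>. indicator A \<omega> \<partial>design_space n p)"
    using A_sets by simp
  also have "\<dots> \<le> (\<integral>\<^sup>+\<omega>. ennreal (exp (- t * Q \<omega>)) \<partial>design_space n p)"
    using t by (intro nn_integral_mono)
      (auto simp: A_def split: split_indicator intro!: mult_nonneg_nonpos)
  also have "\<dots> = (\<integral>\<^sup>+X. \<integral>\<^sup>+W. ennreal (exp (- t * Q (X, W))) \<partial>MW \<partial>MX)"
    using Q_measurable unfolding D by (intro W.nn_integral_fst[symmetric]) measurable
  also have "\<dots> = (\<integral>\<^sup>+X. (\<Prod>i<n. ennreal (exp (- (t - 2 * t\<^sup>2 * (sd i)\<^sup>2) * (g X i)\<^sup>2))) \<partial>MX)"
    unfolding Q_def MW_def fst_conv snd_conv nn_integral_gauss_vector_exp_quadratic ..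
  also have "\<dots> = (\<Prod>i<n. ennreal (1 / sqrt (1 + 2 * (t - 2 * t\<^sup>2 * (sd i)\<^sup>2) * m)))"
    unfolding MX_def g_def m_def using a n by (intro nn_integral_gauss_rows_exp_neg_square[OF v J]) auto
  also have "\<dots> = ennreal B"
    unfolding B_def using factor_nonneg by (intro prod_ennreal) simp
  finally have "emeasure (design_space n p) A \<le> ennreal B" .
  moreover have "0 \<le> B" unfolding B_def using factor_nonneg by (intro prod_nonneg) simp
  ultimately show ?thesis
    unfolding A_def Q_def g_def B_def m_def by (simp add: D.emeasure_eq_measure)
qed

section \<open>Least squares against a single competitor\<close>

lemma Bps_subset_image_indicator:
  "Bps p s \<subseteq> (\<lambda>S. indicator S) ` {S. S \<subseteq> {..<p} \<and> card S = s}"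
proof
  fix \<beta> assume \<beta>: "\<beta> \<in> Bps p s"
  have "\<beta> = indicator {j. \<beta> j \<noteq> 0}"
    using \<beta> by (auto simp: Bps_def indicator_def fun_eq_iff)
  moreover have "{j. \<beta> j \<noteq> 0} \<subseteq> {..<p}"
    using \<beta> by (auto simp: Bps_def) (meson not_le)
  ultimately show "\<beta> \<in> (\<lambda>S. indicator S) ` {S. S \<subseteq> {..<p} \<and> card S = s}"
    using \<beta> by (auto simp: Bps_def)
qed

lemma finite_Bps [simp]: "finite (Bps p s)"
  by (rule finite_subset[OF Bps_subset_image_indicator]) auto

lemma card_Bps_le: "card (Bps p s) \<le> p choose s"
proof -
  have "card (Bps p s) \<le> card ((\<lambda>S. indicator S :: nat \<Rightarrow> real) ` {S. S \<subseteq> {..<p} \<and> card S = s})"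
    by (rule card_mono[OF _ Bps_subset_image_indicator]) auto
  also have "\<dots> \<le> card {S. S \<subseteq> {..<p} \<and> card S = s}"
    by (rule card_image_le) auto
  also have "\<dots> = p choose s" by (subst n_subsets) auto
  finally show ?thesis .
qed

lemma Bps_values: "\<beta> \<in> Bps p s \<Longrightarrow> \<beta> j = 0 \<or> \<beta> j = 1"
  by (auto simp: Bps_def)

lemma Bps_vanishes: "\<beta> \<in> Bps p s \<Longrightarrow> p \<le> j \<Longrightarrow> \<beta> j = 0"
  by (auto simp: Bps_def)

lemma Bps_diff_values:
  assumes "\<beta> \<in> Bps p s" "\<gamma> \<in> Bps p s"
  shows "\<forall>j<p. \<gamma> j - \<beta> j \<in> {-1, 0, 1}"
proof (intro allI impI)
  fix j
  show "\<gamma> j - \<beta> j \<in> {-1, 0, 1}"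
    using Bps_values[OF assms(1), of j] Bps_values[OF assms(2), of j] by auto
qed

lemma Bps_diff_support:
  assumes "\<beta> \<in> Bps p s" "\<gamma> \<in> Bps p s"
  shows "{j. j < p \<and> \<gamma> j - \<beta> j \<noteq> 0} = symdiff (supp \<gamma>) (supp \<beta>)"
proof -
  have "j < p" if "\<gamma> j \<noteq> 0 \<or> \<beta> j \<noteq> 0" for j
    using that Bps_vanishes[OF assms(1), of j] Bps_vanishes[OF assms(2), of j] by (meson not_le)
  then show ?thesis
    using Bps_values[OF assms(1)] Bps_values[OF assms(2)]
    unfolding symdiff_def supp_def by (auto; metis zero_neq_one)
qed

lemma rss_response_diff:
  "rss n p X (response p n1 \<sigma>1 \<sigma>2 \<gamma> X W) \<beta> - rss n p X (response p n1 \<sigma>1 \<sigma>2 \<gamma> X W) \<gamma>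
   = (\<Sum>i<n. (\<Sum>j<p. X (i, j) * (\<gamma> j - \<beta> j))\<^sup>2
        + 2 * (\<Sum>j<p. X (i, j) * (\<gamma> j - \<beta> j)) * (noise_sd n1 \<sigma>1 \<sigma>2 i * W i))"
  unfolding rss_def response_def sum_subtractf[symmetric]
proof (rule sum.cong[OF refl])
  fix i
  have diff: "(\<Sum>j<p. X (i, j) * (\<gamma> j - \<beta> j)) = (\<Sum>j<p. X (i, j) * \<gamma> j) - (\<Sum>j<p. X (i, j) * \<beta> j)"
    by (simp add: right_diff_distrib sum_subtractf)
  show "((\<Sum>j<p. X (i, j) * \<gamma> j) + noise_sd n1 \<sigma>1 \<sigma>2 i * W i - (\<Sum>j<p. X (i, j) * \<beta> j))\<^sup>2 -
         ((\<Sum>j<p. X (i, j) * \<gamma> j) + noise_sd n1 \<sigma>1 \<sigma>2 i * W i - (\<Sum>j<p. X (i, j) * \<gamma> j))\<^sup>2 =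
         (\<Sum>j<p. X (i, j) * (\<gamma> j - \<beta> j))\<^sup>2
         + 2 * (\<Sum>j<p. X (i, j) * (\<gamma> j - \<beta> j)) * (noise_sd n1 \<sigma>1 \<sigma>2 i * W i)"
    unfolding diff by (simp add: power2_eq_square algebra_simps)
qed

lemma measurable_rss_response [measurable]:
  "(\<lambda>\<omega>. rss n p (fst \<omega>) (response p n1 \<sigma>1 \<sigma>2 \<beta>s (fst \<omega>) (snd \<omega>)) \<beta>)
    \<in> borel_measurable (design_space n p)"
  unfolding rss_def response_def design_space_def by measurable

lemma sum_noise_sd:
  fixes f :: "real \<Rightarrow> real"
  shows "(\<Sum>i<n1 + n2. f (noise_sd n1 \<sigma>1 \<sigma>2 i)) = real n1 * f \<sigma>1 + real n2 * f \<sigma>2"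
proof -
  have "(\<Sum>i<n1 + n2. f (noise_sd n1 \<sigma>1 \<sigma>2 i))
      = (\<Sum>i\<in>{..<n1 + n2} \<inter> {i. i < n1}. f \<sigma>1) + (\<Sum>i\<in>{..<n1 + n2} \<inter> - {i. i < n1}. f \<sigma>2)"
    unfolding noise_sd_def if_distrib[of f] by (rule sum.If_cases) simp
  also have "{..<n1 + n2} \<inter> {i. i < n1} = {..<n1}" by auto
  also have "{..<n1 + n2} \<inter> - {i. i < n1} = {n1..<n1 + n2}" by auto
  finally show ?thesis by simp
qed

lemma inverse_sqrt_eq_exp_ln:
  assumes "0 < x"
  shows "1 / sqrt x = exp (- ln x / 2)"
proof -
  have "sqrt x = exp (ln x / 2)"
    using assms by (simp add: powr_half_sqrt[symmetric] powr_def)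
  then show ?thesis by (simp add: exp_minus inverse_eq_divide)
qed

definition error_exponent :: "nat \<Rightarrow> nat \<Rightarrow> nat \<Rightarrow> real \<Rightarrow> real \<Rightarrow> real \<Rightarrow> real" where
  "error_exponent n1 n2 s \<sigma>1 \<sigma>2 \<delta> =
     real n1 * ln (1 + \<delta> * (2 * \<sigma>2\<^sup>2 - \<sigma>1\<^sup>2) * real s / (2 * \<sigma>2 ^ 4))
     + real n2 * ln (1 + \<delta> * real s / (2 * \<sigma>2\<^sup>2))"

lemma chernoff_factor_le:
  fixes \<sigma> \<sigma>2 \<delta> s m t :: real
  assumes \<sigma>: "0 < \<sigma>" "\<sigma> \<le> \<sigma>2" and \<delta>s: "0 \<le> \<delta> * s" "2 * \<delta> * s \<le> m"
    and t: "t = 1 / (4 * \<sigma>2\<^sup>2)"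
  shows "0 \<le> t - 2 * t\<^sup>2 * \<sigma>\<^sup>2"
    and "1 / sqrt (1 + 2 * (t - 2 * t\<^sup>2 * \<sigma>\<^sup>2) * m)
         \<le> exp (- ln (1 + \<delta> * (2 * \<sigma>2\<^sup>2 - \<sigma>\<^sup>2) * s / (2 * \<sigma>2 ^ 4)) / 2)"
proof -
  define c where "c = (2 * \<sigma>2\<^sup>2 - \<sigma>\<^sup>2) / (4 * \<sigma>2 ^ 4)"
  have \<sigma>2: "0 < \<sigma>2" using \<sigma> by linarith
  have c_eq: "2 * (t - 2 * t\<^sup>2 * \<sigma>\<^sup>2) = c"
    using \<sigma>2 by (simp add: t c_def field_simps eval_nat_numeral)
  have "\<sigma>\<^sup>2 \<le> \<sigma>2\<^sup>2" using \<sigma> by (intro power_mono) auto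
  then have "0 \<le> 2 * \<sigma>2\<^sup>2 - \<sigma>\<^sup>2" using zero_le_power2[of \<sigma>2] by linarith
  then have c: "0 \<le> c" unfolding c_def using \<sigma>2 by (intro divide_nonneg_pos) auto
  then show "0 \<le> t - 2 * t\<^sup>2 * \<sigma>\<^sup>2" unfolding c_eq[symmetric] by (simp add: mult_ac)
  have A_eq: "\<delta> * (2 * \<sigma>2\<^sup>2 - \<sigma>\<^sup>2) * s / (2 * \<sigma>2 ^ 4) = c * (2 * \<delta> * s)"
    using \<sigma>2 by (simp add: c_def field_simps)
  have A: "0 \<le> \<delta> * (2 * \<sigma>2\<^sup>2 - \<sigma>\<^sup>2) * s / (2 * \<sigma>2 ^ 4)"
      "\<delta> * (2 * \<sigma>2\<^sup>2 - \<sigma>\<^sup>2) * s / (2 * \<sigma>2 ^ 4) \<le> c * m"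
    unfolding A_eq using c \<delta>s by (auto intro: mult_left_mono)
  have "1 / sqrt (1 + c * m) \<le> 1 / sqrt (1 + \<delta> * (2 * \<sigma>2\<^sup>2 - \<sigma>\<^sup>2) * s / (2 * \<sigma>2 ^ 4))"
    using A by (simp add: frac_le)
  also have "\<dots> = exp (- ln (1 + \<delta> * (2 * \<sigma>2\<^sup>2 - \<sigma>\<^sup>2) * s / (2 * \<sigma>2 ^ 4)) / 2)"
    using A(1) by (intro inverse_sqrt_eq_exp_ln) simp
  finally show "1 / sqrt (1 + 2 * (t - 2 * t\<^sup>2 * \<sigma>\<^sup>2) * m)
         \<le> exp (- ln (1 + \<delta> * (2 * \<sigma>2\<^sup>2 - \<sigma>\<^sup>2) * s / (2 * \<sigma>2 ^ 4)) / 2)"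
    unfolding c_eq .
qed

lemma prob_rss_le_rss_true:
  fixes \<sigma>1 \<sigma>2 \<delta> :: real
  assumes n: "0 < n1 + n2" and \<sigma>: "0 < \<sigma>1" "\<sigma>1 < \<sigma>2"
    and \<beta>s: "\<beta>s \<in> Bps p s" and \<beta>: "\<beta> \<in> Bps p s"
    and far: "2 * \<delta> * real s \<le> real (card (symdiff (supp \<beta>s) (supp \<beta>)))"
    and \<delta>: "0 < \<delta>" and s: "0 < s"
  shows "measure (design_space (n1 + n2) p) {\<omega> \<in> space (design_space (n1 + n2) p).
      rss (n1 + n2) p (fst \<omega>) (response p n1 \<sigma>1 \<sigma>2 \<beta>s (fst \<omega>) (snd \<omega>)) \<beta>
        \<le> rss (n1 + n2) p (fst \<omega>) (response p n1 \<sigma>1 \<sigma>2 \<beta>s (fst \<omega>) (snd \<omega>)) \<beta>s}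
    \<le> exp (- error_exponent n1 n2 s \<sigma>1 \<sigma>2 \<delta> / 2)"
proof -
  \<comment> \<open>maximises the Chernoff gain \<open>t - 2 t\<^sup>2 \<sigma>2\<^sup>2\<close> of the noisier observations\<close>
  define t where "t = 1 / (4 * \<sigma>2\<^sup>2)"
  define sd where "sd = noise_sd n1 \<sigma>1 \<sigma>2"
  define v where "v j = \<beta>s j - \<beta> j" for j
  define m where "m = real (card {j. j < p \<and> v j \<noteq> 0})"
  define A where "A \<sigma> = 1 + \<delta> * (2 * \<sigma>2\<^sup>2 - \<sigma>\<^sup>2) * real s / (2 * \<sigma>2 ^ 4)" for \<sigma>
  have \<sigma>2: "0 < \<sigma>2" using \<sigma> by linarith
  have sd: "0 < sd i" "sd i \<le> \<sigma>2" for i using \<sigma> by (auto simp: sd_def noise_sd_def)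
  have m: "2 * \<delta> * real s \<le> m"
    unfolding m_def v_def Bps_diff_support[OF \<beta> \<beta>s] by (rule far)
  have "0 < m" using m \<delta> s by (smt (verit) mult_pos_pos of_nat_0_less_iff)
  then have J: "{j. j < p \<and> v j \<noteq> 0} \<noteq> {}" by (auto simp: m_def card_gt_0_iff)
  have "0 \<le> \<delta> * real s" using \<delta> by simp
  note factor = chernoff_factor_le[OF sd(1,2) this m t_def]
  have event: "rss (n1 + n2) p X (response p n1 \<sigma>1 \<sigma>2 \<beta>s X W) \<beta>
        \<le> rss (n1 + n2) p X (response p n1 \<sigma>1 \<sigma>2 \<beta>s X W) \<beta>s
      \<longleftrightarrow> (\<Sum>i<n1 + n2. (\<Sum>j<p. X (i, j) * v j)\<^sup>2 + 2 * (\<Sum>j<p. X (i, j) * v j) * (sd i * W i)) \<le> 0" for X W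
    using rss_response_diff[of "n1 + n2" p X n1 \<sigma>1 \<sigma>2 \<beta>s W \<beta>] unfolding v_def sd_def by linarith
  have "measure (design_space (n1 + n2) p) {\<omega> \<in> space (design_space (n1 + n2) p).
      (\<Sum>i<n1 + n2. (\<Sum>j<p. fst \<omega> (i, j) * v j)\<^sup>2 + 2 * (\<Sum>j<p. fst \<omega> (i, j) * v j) * (sd i * snd \<omega> i)) \<le> 0}
      \<le> (\<Prod>i<n1 + n2. 1 / sqrt (1 + 2 * (t - 2 * t\<^sup>2 * (sd i)\<^sup>2) * m))"
    unfolding m_def using factor(1) \<sigma>2
    by (intro design_space_quadratic_form_tail[OF Bps_diff_values[OF \<beta> \<beta>s, folded v_def] J _ n])
      (auto simp: t_def)
  also have "\<dots> \<le> (\<Prod>i<n1 + n2. exp (- ln (A (sd i)) / 2))"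
  proof (rule prod_mono)
    fix i
    have "0 \<le> 2 * (t - 2 * t\<^sup>2 * (sd i)\<^sup>2) * m"
      using factor(1) \<open>0 < m\<close> by (intro mult_nonneg_nonneg) auto
    then show "0 \<le> 1 / sqrt (1 + 2 * (t - 2 * t\<^sup>2 * (sd i)\<^sup>2) * m)
        \<and> 1 / sqrt (1 + 2 * (t - 2 * t\<^sup>2 * (sd i)\<^sup>2) * m) \<le> exp (- ln (A (sd i)) / 2)"
      using factor(2) by (simp add: A_def)
  qed
  also have "\<dots> = exp (- (\<Sum>i<n1 + n2. ln (A (sd i))) / 2)"
    by (simp add: exp_sum[symmetric] sum_divide_distrib sum_negf)
  also have "\<dots> = exp (- error_exponent n1 n2 s \<sigma>1 \<sigma>2 \<delta> / 2)"
  proof -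
    have "A \<sigma>2 = 1 + \<delta> * real s / (2 * \<sigma>2\<^sup>2)"
      using \<sigma>2 by (simp add: A_def field_simps eval_nat_numeral)
    then show ?thesis
      unfolding sd_def sum_noise_sd[where f = "\<lambda>\<sigma>. ln (A \<sigma>)"] by (simp add: error_exponent_def A_def)
  qed
  finally show ?thesis by (simp only: event)
qed

lemma recovery_prob_le_1: "recovery_prob n1 n2 p s \<sigma>1 \<sigma>2 \<beta>s \<delta> \<le> 1"
  unfolding recovery_prob_def by (rule prob_space.prob_le_1[OF prob_space_design_space])

lemma recovery_prob_lower_bound:
  fixes \<sigma>1 \<sigma>2 \<delta> :: real
  assumes n: "0 < n1 + n2" and \<sigma>: "0 < \<sigma>1" "\<sigma>1 < \<sigma>2" and \<beta>s: "\<beta>s \<in> Bps p s"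
    and \<delta>: "0 < \<delta>" and s: "0 < s"
  shows "1 - real (p choose s) * exp (- error_exponent n1 n2 s \<sigma>1 \<sigma>2 \<delta> / 2)
           \<le> recovery_prob n1 n2 p s \<sigma>1 \<sigma>2 \<beta>s \<delta>"
proof -
  define D where "D = design_space (n1 + n2) p"
  define E where "E = exp (- error_exponent n1 n2 s \<sigma>1 \<sigma>2 \<delta> / 2)"
  define R where "R \<omega> \<beta> = rss (n1 + n2) p (fst \<omega>) (response p n1 \<sigma>1 \<sigma>2 \<beta>s (fst \<omega>) (snd \<omega>)) \<beta>"
    for \<omega> \<beta>
  define far where "far \<beta> \<longleftrightarrow> 2 * \<delta> * real s \<le> real (card (symdiff (supp \<beta>s) (supp \<beta>)))" for \<beta>
  define F where "F \<beta> = {\<omega> \<in> space D. R \<omega> \<beta> \<le> R \<omega> \<beta>s}" for \<beta>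
  define G where
    "G = {\<omega> \<in> space D. \<forall>\<beta>h \<in> Bps p s. (\<forall>\<beta> \<in> Bps p s. R \<omega> \<beta>h \<le> R \<omega> \<beta>) \<longrightarrow> \<not> far \<beta>h}"
  interpret P: prob_space D unfolding D_def by (rule prob_space_design_space)
  have G_sets: "G \<in> sets D" and F_sets: "F \<beta> \<in> sets D" for \<beta>
    unfolding G_def F_def R_def D_def by measurable
  have "space D - G \<subseteq> (\<Union>\<beta>\<in>{\<beta> \<in> Bps p s. far \<beta>}. F \<beta>)"
    using \<beta>s by (force simp: G_def F_def)
  then have "P.prob (space D - G) \<le> P.prob (\<Union>\<beta>\<in>{\<beta> \<in> Bps p s. far \<beta>}. F \<beta>)"
    using F_sets by (intro P.finite_measure_mono) auto
  also have "\<dots> \<le> (\<Sum>\<beta>\<in>{\<beta> \<in> Bps p s. far \<beta>}. P.prob (F \<beta>))"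
    using F_sets by (intro P.finite_measure_subadditive_finite) auto
  also have "\<dots> \<le> (\<Sum>\<beta>\<in>{\<beta> \<in> Bps p s. far \<beta>}. E)"
    unfolding F_def R_def D_def E_def far_def
    using prob_rss_le_rss_true[OF n \<sigma> \<beta>s _ _ \<delta> s] by (intro sum_mono) auto
  also have "\<dots> \<le> real (p choose s) * E"
  proof -
    have "card {\<beta> \<in> Bps p s. far \<beta>} \<le> p choose s"
      using card_mono[of "Bps p s" "{\<beta> \<in> Bps p s. far \<beta>}"] card_Bps_le[of p s] by auto
    then show ?thesis unfolding E_def by (simp add: mult_right_mono)
  qed
  finally have "1 - real (p choose s) * E \<le> P.prob G"
    using P.prob_compl[OF G_sets] by linarith
  moreover have "G = {\<omega> \<in> space D. \<forall>\<beta>h \<in> ls_argmin (n1 + n2) p s (fst \<omega>)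
      (response p n1 \<sigma>1 \<sigma>2 \<beta>s (fst \<omega>) (snd \<omega>)).
        real (card (symdiff (supp \<beta>s) (supp \<beta>h))) < 2 * \<delta> * real s}"
    unfolding G_def ls_argmin_def R_def far_def by auto
  ultimately show ?thesis unfolding recovery_prob_def D_def E_def by simp
qed

section \<open>Entropy bounds and asymptotics\<close>

lemma binomial_le_exp_bin_entropy:
  assumes "0 < s" "s < p"
  shows "real (p choose s) \<le> exp (real p * bin_entropy (real s / real p))"
proof -
  define a where "a = real s / real p"
  have a: "0 < a" "a < 1" using assms by (auto simp: a_def)
  have "real (p choose s) * a ^ s * (1 - a) ^ (p - s) \<le> (\<Sum>k\<le>p. real (p choose k) * a ^ k * (1 - a) ^ (p - k))"
    using assms a by (intro member_le_sum[where f = "\<lambda>k. real (p choose k) * a ^ k * (1 - a) ^ (p - k)"]) auto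
  also have "\<dots> = (a + (1 - a)) ^ p"
    by (subst binomial_ring) (simp add: mult.commute mult.left_commute)
  finally have "real (p choose s) * (a ^ s * (1 - a) ^ (p - s)) \<le> 1" by (simp add: mult.assoc)
  moreover have "a ^ s * (1 - a) ^ (p - s) = exp (- (real p * bin_entropy a))"
  proof -
    have s_eq: "real s = real p * a" and ps_eq: "real (p - s) = real p * (1 - a)"
      using assms by (auto simp: a_def of_nat_diff field_simps)
    have "a ^ s * (1 - a) ^ (p - s) = exp (real s * ln a + real (p - s) * ln (1 - a))"
      using a by (simp add: exp_add exp_of_nat_mult)
    also have "\<dots> = exp (- (real p * bin_entropy a))"
      unfolding s_eq ps_eq by (simp add: bin_entropy_def algebra_simps)
    finally show ?thesis .
  qed
  ultimately have "real (p choose s) * exp (- (real p * bin_entropy a)) \<le> 1" by simp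
  then show ?thesis unfolding a_def[symmetric] by (simp add: exp_minus field_simps)
qed

lemma bin_entropy_le: "0 < x \<Longrightarrow> x < 1 \<Longrightarrow> bin_entropy x \<le> x * ln (1 / x) + x"
proof -
  assume x: "0 < x" "x < 1"
  have "- (1 - x) * ln (1 - x) = (1 - x) * ln (1 / (1 - x))"
    using x by (simp add: ln_div algebra_simps)
  also have "\<dots> \<le> (1 - x) * (1 / (1 - x) - 1)"
    using x by (intro mult_left_mono ln_le_minus_one) auto
  also have "\<dots> = x" using x by (simp add: field_simps)
  finally show ?thesis using x by (simp add: bin_entropy_def ln_div algebra_simps)
qed

lemma bin_entropy_pos: "0 < x \<Longrightarrow> x < 1 \<Longrightarrow> 0 < bin_entropy x"
proof -
  assume x: "0 < x" "x < 1"
  moreover have "ln x < 0" "ln (1 - x) < 0" using x by simp_all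
  ultimately have "0 < x * (- ln x)" "0 < (1 - x) * (- ln (1 - x))"
    by (simp_all add: mult_pos_neg)
  then show ?thesis by (simp add: bin_entropy_def algebra_simps)
qed

lemma tendsto_one_if_exp_lower_bound:
  fixes P r N :: "nat \<Rightarrow> real" and \<epsilon> :: real
  assumes r: "r \<longlonglongrightarrow> 0" and \<epsilon>: "0 < \<epsilon>" and N: "filterlim N at_top sequentially"
    and lower: "eventually (\<lambda>k. 1 - exp (- (\<epsilon> + r k) * N k / 2) \<le> P k) sequentially"
    and upper: "\<And>k. P k \<le> 1"
  shows "P \<longlonglongrightarrow> 1"
proof (rule tendsto_sandwich[OF lower _ _ tendsto_const])
  show "eventually (\<lambda>k. P k \<le> 1) sequentially" using upper by simp
  have "(\<lambda>k. (\<epsilon> + r k) / 2) \<longlonglongrightarrow> \<epsilon> / 2"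
    using tendsto_add[OF tendsto_const r, of \<epsilon>] by (intro tendsto_divide) auto
  then have "filterlim (\<lambda>k. (\<epsilon> + r k) / 2 * N k) at_top sequentially"
    by (rule filterlim_tendsto_pos_mult_at_top[OF _ _ N]) (use \<epsilon> in simp)
  then have "filterlim (\<lambda>k. - ((\<epsilon> + r k) / 2 * N k)) at_bot sequentially"
    by (simp add: filterlim_uminus_at_top)
  moreover have "(\<lambda>k. - ((\<epsilon> + r k) / 2 * N k)) = (\<lambda>k. - (\<epsilon> + r k) * N k / 2)"
    by (simp add: fun_eq_iff algebra_simps)
  ultimately have "filterlim (\<lambda>k. - (\<epsilon> + r k) * N k / 2) at_bot sequentially"
    by simp
  then have "(\<lambda>k. exp (- (\<epsilon> + r k) * N k / 2)) \<longlonglongrightarrow> 0"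
    by (rule filterlim_compose[OF exp_at_bot])
  then show "(\<lambda>k. 1 - exp (- (\<epsilon> + r k) * N k / 2)) \<longlonglongrightarrow> 1"
    using tendsto_diff[OF tendsto_const, of _ 0 sequentially 1] by simp
qed

lemma exp_rate_from_union_bound:
  fixes P C L N e :: "nat \<Rightarrow> real" and \<epsilon> :: real
  assumes N: "filterlim N at_top sequentially" and e: "(\<lambda>k. e k / N k) \<longlonglongrightarrow> 0"
    and \<epsilon>: "0 < \<epsilon>" and upper: "\<And>k. P k \<le> 1"
    and bounds: "eventually (\<lambda>k. 1 - C k * exp (- L k / 2) \<le> P k
        \<and> C k \<le> exp (N k / 2 + e k) \<and> (1 + \<epsilon>) * N k \<le> L k) sequentially"
  shows "\<exists>r. r \<longlonglongrightarrow> 0 \<and> eventually (\<lambda>k. P k \<ge> 1 - exp (- (\<epsilon> + r k) * N k / 2)) sequentially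
           \<and> P \<longlonglongrightarrow> 1"
proof (intro exI conjI)
  define r where "r k = - 2 * (e k / N k)" for k
  show r: "r \<longlonglongrightarrow> 0"
    unfolding r_def using tendsto_mult[OF tendsto_const e, of "- 2"] by simp
  have "eventually (\<lambda>k. 0 < N k) sequentially" using N by (simp add: filterlim_at_top_dense)
  with bounds show lower: "eventually (\<lambda>k. P k \<ge> 1 - exp (- (\<epsilon> + r k) * N k / 2)) sequentially"
  proof eventually_elim
    case (elim k)
    have "C k * exp (- L k / 2) \<le> exp (N k / 2 + e k) * exp (- L k / 2)"
      using elim by (intro mult_right_mono) auto
    also have "\<dots> = exp (N k / 2 + e k - L k / 2)" by (simp add: mult_exp_exp)
    also have "\<dots> \<le> exp (- (\<epsilon> + r k) * N k / 2)"
    proof -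
      have rate: "- (\<epsilon> + r k) * N k / 2 = e k - \<epsilon> * N k / 2"
        using elim by (simp add: r_def field_simps)
      show ?thesis unfolding rate using elim by (simp add: algebra_simps)
    qed
    finally show ?case using elim by linarith
  qed
  show "P \<longlonglongrightarrow> 1" by (rule tendsto_one_if_exp_lower_bound[OF r \<epsilon> N lower upper])
qed

lemma sparse_regime_binomial_bound:
  fixes p s :: "nat \<Rightarrow> nat" and N :: "nat \<Rightarrow> real"
  assumes p: "filterlim p at_top sequentially" and s: "filterlim s at_top sequentially"
    and sp: "((\<lambda>k. real (s k) / real (p k)) \<longlongrightarrow> 0) sequentially"
    and N: "\<forall>k. N k = 2 * real (s k) * ln (real (p k) / real (s k))"
  shows "filterlim N at_top sequentially"
    and "(\<lambda>k. real (s k) / N k) \<longlonglongrightarrow> 0"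
    and "eventually (\<lambda>k. 0 < s k \<and> real (p k choose s k) \<le> exp (N k / 2 + real (s k))) sequentially"
proof -
  define q where "q k = real (p k) / real (s k)" for k
  have s_pos: "eventually (\<lambda>k. 0 < s k) sequentially"
    by (rule eventually_compose_filterlim[OF eventually_gt_at_top s])
  have p_pos: "eventually (\<lambda>k. 0 < p k) sequentially"
    by (rule eventually_compose_filterlim[OF eventually_gt_at_top p])
  have "eventually (\<lambda>k. 0 < real (s k) / real (p k)) sequentially"
    using s_pos p_pos by eventually_elim simp
  then have "filterlim (\<lambda>k. real (s k) / real (p k)) (at_right 0) sequentially"
    by (rule tendsto_imp_filterlim_at_right[OF sp])
  then have "filterlim (\<lambda>k. inverse (real (s k) / real (p k))) at_top sequentially"
    by (rule filterlim_compose[OF filterlim_inverse_at_top_right])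
  then have "filterlim q at_top sequentially" by (simp add: q_def[abs_def])
  then have ln_q: "filterlim (\<lambda>k. 2 * ln (q k)) at_top sequentially"
    by (intro filterlim_tendsto_pos_mult_at_top[OF tendsto_const] filterlim_compose[OF ln_at_top]) auto
  have N_eq: "N = (\<lambda>k. real (s k) * (2 * ln (q k)))"
    using N by (simp add: fun_eq_iff q_def)
  show "filterlim N at_top sequentially"
    unfolding N_eq
    by (rule filterlim_at_top_mult_at_top[OF filterlim_compose[OF filterlim_real_sequentially s] ln_q])
  have "(\<lambda>k. inverse (2 * ln (q k))) \<longlonglongrightarrow> 0"
    by (rule tendsto_inverse_0_at_top[OF ln_q])
  moreover have "eventually (\<lambda>k. inverse (2 * ln (q k)) = real (s k) / N k) sequentially"
    using s_pos by eventually_elim (simp add: N_eq inverse_eq_divide)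
  ultimately show "(\<lambda>k. real (s k) / N k) \<longlonglongrightarrow> 0"
    by (rule Lim_transform_eventually)
  have "eventually (\<lambda>k. real (s k) / real (p k) < 1) sequentially"
    using sp by (rule order_tendstoD) simp
  with s_pos p_pos
  show "eventually (\<lambda>k. 0 < s k \<and> real (p k choose s k) \<le> exp (N k / 2 + real (s k))) sequentially"
  proof eventually_elim
    case (elim k)
    then have "s k < p k" by (simp add: divide_less_eq)
    have "real (p k choose s k) \<le> exp (real (p k) * bin_entropy (real (s k) / real (p k)))"
      using elim \<open>s k < p k\<close> by (intro binomial_le_exp_bin_entropy) auto
    also have "\<dots> \<le> exp (real (p k) * (real (s k) / real (p k) * ln (1 / (real (s k) / real (p k)))
        + real (s k) / real (p k)))"
      using elim by (intro exp_mono mult_left_mono bin_entropy_le) auto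
    also have "\<dots> = exp (N k / 2 + real (s k))"
      using elim N by (simp add: field_simps)
    finally show ?case using elim by simp
  qed
qed

lemma dense_regime_binomial_bound:
  fixes p s :: "nat \<Rightarrow> nat" and N :: "nat \<Rightarrow> real" and \<alpha> :: real
  assumes p: "filterlim p at_top sequentially" and \<alpha>: "0 < \<alpha>" "\<alpha> < 1"
    and s: "\<forall>k. real (s k) = \<alpha> * real (p k)"
    and N: "\<forall>k. N k = 2 * bin_entropy \<alpha> * real (p k)"
  shows "filterlim N at_top sequentially"
    and "eventually (\<lambda>k. 0 < s k \<and> real (p k choose s k) \<le> exp (N k / 2)) sequentially"
proof -
  have "N = (\<lambda>k. 2 * bin_entropy \<alpha> * real (p k))" using N by auto
  then show "filterlim N at_top sequentially"
    using bin_entropy_pos[OF \<alpha>]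
    by (auto intro!: filterlim_tendsto_pos_mult_at_top[OF tendsto_const]
        filterlim_compose[OF filterlim_real_sequentially p])
  have "eventually (\<lambda>k. 0 < p k) sequentially"
    by (rule eventually_compose_filterlim[OF eventually_gt_at_top p])
  then show "eventually (\<lambda>k. 0 < s k \<and> real (p k choose s k) \<le> exp (N k / 2)) sequentially"
  proof eventually_elim
    case (elim k)
    then have "0 < real (s k)" "real (s k) < real (p k)" using s \<alpha> by auto
    then have "real (p k choose s k) \<le> exp (real (p k) * bin_entropy (real (s k) / real (p k)))"
      by (intro binomial_le_exp_bin_entropy) auto
    also have "\<dots> = exp (N k / 2)" using elim s N by simp
    finally show ?case using \<open>0 < real (s k)\<close> by simp
  qed
qed

theorem theorem1:
  fixes p s n1 n2 :: "nat \<Rightarrow> nat"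
    and \<sigma>1 \<sigma>2 :: "nat \<Rightarrow> real"
    and \<beta>s :: "nat \<Rightarrow> nat \<Rightarrow> real"
    and nstar :: "nat \<Rightarrow> real"
    and \<delta> \<epsilon> :: real
  assumes p_lim: "filterlim p at_top sequentially"
    and n1_pos: "\<forall>k. n1 k \<ge> 1"
    and n2_pos: "\<forall>k. n2 k \<ge> 1"
    and sigma: "\<forall>k. 0 < \<sigma>1 k \<and> \<sigma>1 k < \<sigma>2 k"
    and beta_star: "\<forall>k. \<beta>s k \<in> Bps (p k) (s k)"
    and delta: "0 < \<delta>" "\<delta> < 1"
    and regime:
      "(filterlim s at_top sequentially
          \<and> ((\<lambda>k. real (s k) / real (p k)) \<longlongrightarrow> 0) sequentially
          \<and> (\<forall>k. nstar k = 2 * real (s k) * ln (real (p k) / real (s k))))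
       \<or> (\<exists>\<alpha>. 0 < \<alpha> \<and> \<alpha> < 1 \<and> (\<forall>k. real (s k) = \<alpha> * real (p k))
          \<and> (\<forall>k. nstar k = 2 * bin_entropy \<alpha> * real (p k)))"
    and eps: "\<epsilon> > 0"
    and cond: "eventually (\<lambda>k.
        real (n1 k) * ln (1 + \<delta> * (2 * (\<sigma>2 k)\<^sup>2 - (\<sigma>1 k)\<^sup>2) * real (s k) / (2 * (\<sigma>2 k) ^ 4))
        + real (n2 k) * ln (1 + \<delta> * real (s k) / (2 * (\<sigma>2 k)\<^sup>2))
        \<ge> (1 + \<epsilon>) * nstar k) sequentially"
  shows "\<exists>r :: nat \<Rightarrow> real. (r \<longlonglongrightarrow> 0)
           \<and> eventually (\<lambda>k. recovery_prob (n1 k) (n2 k) (p k) (s k) (\<sigma>1 k) (\<sigma>2 k) (\<beta>s k) \<delta>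
                 \<ge> 1 - exp (- (\<epsilon> + r k) * nstar k / 2)) sequentially
           \<and> ((\<lambda>k. recovery_prob (n1 k) (n2 k) (p k) (s k) (\<sigma>1 k) (\<sigma>2 k) (\<beta>s k) \<delta>)
                 \<longlonglongrightarrow> 1)"
proof -
  define P where "P k = recovery_prob (n1 k) (n2 k) (p k) (s k) (\<sigma>1 k) (\<sigma>2 k) (\<beta>s k) \<delta>" for k
  define L where "L k = error_exponent (n1 k) (n2 k) (s k) (\<sigma>1 k) (\<sigma>2 k) \<delta>" for k
  have lower: "1 - real (p k choose s k) * exp (- L k / 2) \<le> P k" if "0 < s k" for k
    unfolding P_def L_def using n1_pos sigma beta_star delta(1) that
    by (intro recovery_prob_lower_bound) (auto simp: Suc_le_eq)
  obtain e where N: "filterlim nstar at_top sequentially" and e: "(\<lambda>k. e k / nstar k) \<longlonglongrightarrow> 0"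
    and binomial: "eventually (\<lambda>k. 0 < s k \<and> real (p k choose s k) \<le> exp (nstar k / 2 + e k)) sequentially"
    using regime
  proof (elim disjE conjE exE)
    assume "filterlim s at_top sequentially" "((\<lambda>k. real (s k) / real (p k)) \<longlongrightarrow> 0) sequentially"
      "\<forall>k. nstar k = 2 * real (s k) * ln (real (p k) / real (s k))"
    from sparse_regime_binomial_bound[OF p_lim this] show thesis by (rule that)
  next
    fix \<alpha> :: real
    assume "0 < \<alpha>" "\<alpha> < 1" "\<forall>k. real (s k) = \<alpha> * real (p k)"
      "\<forall>k. nstar k = 2 * bin_entropy \<alpha> * real (p k)"
    from dense_regime_binomial_bound[OF p_lim this] show thesis by (intro that[of "\<lambda>_. 0"]) simp_all
  qed
  have "eventually (\<lambda>k. 1 - real (p k choose s k) * exp (- L k / 2) \<le> P k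
      \<and> real (p k choose s k) \<le> exp (nstar k / 2 + e k) \<and> (1 + \<epsilon>) * nstar k \<le> L k) sequentially"
    using binomial cond by eventually_elim (use lower in \<open>auto simp: L_def error_exponent_def\<close>)
  from exp_rate_from_union_bound[OF N e eps _ this] show ?thesis
    unfolding P_def by (simp add: recovery_prob_le_1)
qed

end
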